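(* Let $n\ge2$ and let $r_1,\ldots,r_{n-1}$ be positive reals with $r_i>\sum_{j>i}r_j$ for each $i$. For $\overline\theta=(\theta_1,\ldots,\theta_{n-1})$, $\theta_i\in\mathbb{R}/2\pi$, define $w_n=r_{n-1}$, $w_i=r_{i-1}+w_{i+1}\cos\theta_i$ for $1<i\le n-1$, $x_i=w_i\sin\theta_{i-1}$ for $1<i\le n$, and $x_1=w_2\cos\theta_1$. Then $\overline\theta\mapsto(x_1(\overline\theta),\ldots,x_n(\overline\theta))$ is an embedding of the torus $T^{n-1}$ in $\mathbb{R}^n$ satisfying $x_1(-\overline\theta)=x_1(\overline\theta)$ and $x_i(-\overline\theta)=-x_i(\overline\theta)$ for $2\le i\le n$. *)

theory Defs
  imports "HOL-Analysis.Analysis"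
begin

text \<open>Angles theta and radii r are indexed by 1..n-1 (functions nat => real; other
  values are irrelevant).  w n r theta i is the paper's w_i:
  w_n = r_(n-1) and w_i = r_(i-1) + w_(i+1) cos theta_i for i < n.\<close>

function w :: "nat \<Rightarrow> (nat \<Rightarrow> real) \<Rightarrow> (nat \<Rightarrow> real) \<Rightarrow> nat \<Rightarrow> real" where
  "w n r \<theta> i = (if n \<le> i then r (n - 1) else r (i - 1) + w n r \<theta> (Suc i) * cos (\<theta> i))"
  by pat_completeness auto
termination by (relation "Wellfounded.measure (\<lambda>(n, r, \<theta>, i). n - i)") auto

definition xc :: "nat \<Rightarrow> (nat \<Rightarrow> real) \<Rightarrow> (nat \<Rightarrow> real) \<Rightarrow> nat \<Rightarrow> real" where
  "xc n r \<theta> i = (if i = 1 then w n r \<theta> 2 * cos (\<theta> 1) else w n r \<theta> i * sin (\<theta> (i - 1)))"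

definition torus :: "nat \<Rightarrow> (nat \<Rightarrow> complex) topology" where
  "torus n = product_topology (\<lambda>j. top_of_set (sphere (0::complex) 1)) {1..n-1}"

definition Rn :: "nat \<Rightarrow> (nat \<Rightarrow> real) topology" where
  "Rn n = product_topology (\<lambda>i. euclideanreal) {1..n}"

definition torus_pt :: "nat \<Rightarrow> (nat \<Rightarrow> real) \<Rightarrow> nat \<Rightarrow> complex" where
  "torus_pt n \<theta> = restrict (\<lambda>j. cis (\<theta> j)) {1..n-1}"

end

theory Submission
  imports Defs
begin

text \<open>Replacing \<open>cos \<theta>\<^sub>j\<close> by \<open>Re z\<^sub>j\<close> defines the map directly on the torus. The dominance
  condition \<open>r\<^sub>i > \<Sum>\<^sub>j\<^sub>>\<^sub>i r\<^sub>j\<close> makes \<open>w\<^sub>i > 0\<close> for \<open>i \<ge> 2\<close>, since \<open>|w\<^sub>i\<^sub>+\<^sub>1| \<le> \<Sum>\<^sub>j\<^sub>\<ge>\<^sub>i r\<^sub>j\<close>.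
  The point is then recovered from its image one angle at a time: \<open>w\<^sub>k\<^sub>+\<^sub>1 z\<^sub>k\<close> has imaginary part
  \<open>x\<^sub>k\<^sub>+\<^sub>1\<close> and real part \<open>x\<^sub>1\<close> (if \<open>k = 1\<close>) or \<open>w\<^sub>k - r\<^sub>k\<^sub>-\<^sub>1\<close> (if \<open>k > 1\<close>), and since \<open>w\<^sub>k\<^sub>+\<^sub>1 > 0\<close> its
  polar form yields \<open>w\<^sub>k\<^sub>+\<^sub>1\<close> and \<open>z\<^sub>k\<close>. A continuous injection of the compact torus into the
  Hausdorff space \<open>\<real>\<^sup>n\<close> is an embedding. The same recursion, applied to a tangent vector,
  shows that the Jacobian has trivial kernel; the symmetries hold because \<open>cos\<close> is even and
  \<open>sin\<close> is odd.\<close>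

function w_cos :: "nat \<Rightarrow> (nat \<Rightarrow> real) \<Rightarrow> (nat \<Rightarrow> real) \<Rightarrow> nat \<Rightarrow> real" where
  "w_cos n r c i = (if n \<le> i then r (n - 1) else r (i - 1) + w_cos n r c (Suc i) * c i)"
  by pat_completeness auto
termination by (relation "Wellfounded.measure (\<lambda>(n, r, c, i). n - i)") auto

declare w_cos.simps [simp del] w.simps [simp del]

lemma w_cos_ge: "n \<le> i \<Longrightarrow> w_cos n r c i = r (n - 1)"
  by (simp add: w_cos.simps)

lemma w_cos_less: "i < n \<Longrightarrow> w_cos n r c i = r (i - 1) + w_cos n r c (Suc i) * c i"
  by (subst w_cos.simps) simp

lemma w_eq_w_cos: "w n r \<theta> i = w_cos n r (\<lambda>j. cos (\<theta> j)) i"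
proof (induction n r \<theta> i rule: w.induct)
  case (1 n r \<theta> i)
  then show ?case by (subst w.simps, subst w_cos.simps) simp
qed

lemma w_cos_cong:
  assumes "\<And>j. i \<le> j \<Longrightarrow> j < n \<Longrightarrow> c j = c' j"
  shows "w_cos n r c i = w_cos n r c' i"
  using assms
proof (induction n r c i rule: w_cos.induct)
  case (1 n r c i)
  then show ?case by (cases "n \<le> i") (simp_all add: w_cos_ge w_cos_less)
qed

lemma w_minus: "w n r (\<lambda>j. - \<theta> j) i = w n r \<theta> i"
  by (simp add: w_eq_w_cos)

lemma abs_w_cos_le:
  assumes r: "\<And>j. 1 \<le> j \<Longrightarrow> j \<le> n - 1 \<Longrightarrow> 0 \<le> r j"
    and c: "\<And>j. 1 \<le> j \<Longrightarrow> j \<le> n - 1 \<Longrightarrow> \<bar>c j\<bar> \<le> 1"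
    and "2 \<le> i" "i \<le> n"
  shows "\<bar>w_cos n r c i\<bar> \<le> (\<Sum>j\<in>{i-1..n-1}. r j)"
  using \<open>i \<le> n\<close> \<open>2 \<le> i\<close>
proof (induction i rule: inc_induct)
  case base
  then show ?case using r[of "n - 1"] by (simp add: w_cos_ge)
next
  case (step i)
  have "\<bar>w_cos n r c i\<bar> \<le> r (i - 1) + \<bar>w_cos n r c (Suc i)\<bar> * \<bar>c i\<bar>"
    using abs_triangle_ineq[of "r (i - 1)" "w_cos n r c (Suc i) * c i"] r[of "i - 1"] step
    by (simp add: w_cos_less abs_mult)
  also have "\<dots> \<le> r (i - 1) + (\<Sum>j\<in>{i..n-1}. r j)"
    using step c[of i] mult_right_le_one_le[of "\<bar>w_cos n r c (Suc i)\<bar>" "\<bar>c i\<bar>"] by simp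
  also have "\<dots> = (\<Sum>j\<in>{i-1..n-1}. r j)"
  proof -
    have "{i-1..n-1} = insert (i-1) {i..n-1}" using step by auto
    then show ?thesis using step by simp
  qed
  finally show ?case .
qed

lemma w_cos_pos:
  assumes r: "\<And>j. 1 \<le> j \<Longrightarrow> j \<le> n - 1 \<Longrightarrow> 0 \<le> r j"
    and dominant: "\<And>j. 1 \<le> j \<Longrightarrow> j \<le> n - 1 \<Longrightarrow> r j > (\<Sum>k\<in>{j<..n-1}. r k)"
    and c: "\<And>j. 1 \<le> j \<Longrightarrow> j \<le> n - 1 \<Longrightarrow> \<bar>c j\<bar> \<le> 1"
    and i: "2 \<le> i" "i \<le> n"
  shows "w_cos n r c i > 0"
proof (cases "i = n")
  case True
  then show ?thesis using dominant[of "n - 1"] i by (simp add: w_cos_ge)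
next
  case False
  have "\<bar>w_cos n r c (Suc i) * c i\<bar> \<le> \<bar>w_cos n r c (Suc i)\<bar>"
    using c[of i] i False by (simp add: abs_mult mult_left_le)
  also have "\<dots> \<le> (\<Sum>k\<in>{i..n-1}. r k)"
    using abs_w_cos_le[of n r c "Suc i", OF r c] i False by simp
  also have "\<dots> < r (i - 1)"
  proof -
    have "{i - 1<..n - 1} = {i..n - 1}" using i by auto
    then show ?thesis using dominant[of "i - 1"] i False by simp
  qed
  finally show ?thesis using i False by (simp add: w_cos_less)
qed

lemma w_pos:
  assumes "\<And>j. 1 \<le> j \<Longrightarrow> j \<le> n - 1 \<Longrightarrow> 0 \<le> r j"
    and "\<And>j. 1 \<le> j \<Longrightarrow> j \<le> n - 1 \<Longrightarrow> r j > (\<Sum>k\<in>{j<..n-1}. r k)"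
    and "2 \<le> i" "i \<le> n"
  shows "w n r \<theta> i > 0"
  unfolding w_eq_w_cos using assms by (intro w_cos_pos) auto

lemma continuous_map_w_cos:
  assumes "\<And>j. i \<le> j \<Longrightarrow> j < n \<Longrightarrow> continuous_map X euclideanreal (\<lambda>x. c x j)"
  shows "continuous_map X euclideanreal (\<lambda>x. w_cos n r (c x) i)"
proof (cases "i \<le> n")
  case False
  then show ?thesis by (simp add: w_cos_ge)
next
  case True
  then show ?thesis
    using assms
  proof (induction i rule: inc_induct)
    case base
    then show ?case by (simp add: w_cos_ge)
  next
    case (step i)
    then show ?case
      by (simp add: w_cos_less continuous_map_add continuous_map_real_mult)
  qed
qed

lemma topspace_torus: "topspace (torus n) = (\<Pi>\<^sub>E j\<in>{1..n-1}. sphere 0 1)"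
  by (simp add: torus_def)

lemma continuous_map_torus_component:
  assumes "j \<in> {1..n-1}"
  shows "continuous_map (torus n) euclidean (\<lambda>z. z j)"
proof -
  have "continuous_map (torus n) (top_of_set (sphere 0 1)) (\<lambda>z. z j)"
    unfolding torus_def using assms by (rule continuous_map_product_projection)
  then show ?thesis by (simp add: continuous_map_in_subtopology)
qed

lemma compact_space_torus: "compact_space (torus n)"
  unfolding torus_def compact_space_product_topology
  by (auto intro: compact_space_subtopology simp: compactin_euclidean_iff)

lemma Hausdorff_space_Rn: "Hausdorff_space (Rn n)"
  by (simp add: Rn_def Hausdorff_space_product_topology)

definition torus_w :: "nat \<Rightarrow> (nat \<Rightarrow> real) \<Rightarrow> (nat \<Rightarrow> complex) \<Rightarrow> nat \<Rightarrow> real" where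
  "torus_w n r z = w_cos n r (\<lambda>j. Re (z j))"

definition torus_map :: "nat \<Rightarrow> (nat \<Rightarrow> real) \<Rightarrow> (nat \<Rightarrow> complex) \<Rightarrow> nat \<Rightarrow> real" where
  "torus_map n r z = restrict (\<lambda>i. if i = 1 then torus_w n r z 2 * Re (z 1)
                                   else torus_w n r z i * Im (z (i - 1))) {1..n}"

lemma torus_w_torus_pt: "1 \<le> i \<Longrightarrow> torus_w n r (torus_pt n \<theta>) i = w n r \<theta> i"
  unfolding torus_w_def w_eq_w_cos by (rule w_cos_cong) (auto simp: torus_pt_def)

lemma torus_map_torus_pt:
  assumes "n \<ge> 2"
  shows "torus_map n r (torus_pt n \<theta>) = restrict (xc n r \<theta>) {1..n}"
proof
  fix i
  have "torus_pt n \<theta> (i - 1) = cis (\<theta> (i - 1))" if "i \<in> {2..n}"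
    using that by (auto simp: torus_pt_def)
  moreover have "torus_pt n \<theta> 1 = cis (\<theta> 1)"
    using assms by (auto simp: torus_pt_def)
  ultimately show "torus_map n r (torus_pt n \<theta>) i = restrict (xc n r \<theta>) {1..n} i"
    by (auto simp: torus_map_def xc_def torus_w_torus_pt)
qed

lemma continuous_map_torus_map:
  assumes "n \<ge> 2"
  shows "continuous_map (torus n) (Rn n) (torus_map n r)"
  unfolding Rn_def continuous_map_componentwise
proof (intro conjI ballI)
  have Re: "continuous_map (torus n) euclideanreal (\<lambda>z. Re (z j))"
    and Im: "continuous_map (torus n) euclideanreal (\<lambda>z. Im (z j))" if "j \<in> {1..n-1}" for j
    using continuous_map_compose[OF continuous_map_torus_component[OF that], of euclideanreal Re]
      continuous_map_compose[OF continuous_map_torus_component[OF that], of euclideanreal Im]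
    by (simp_all add: o_def continuous_on_Re continuous_on_Im continuous_on_id)
  have w: "continuous_map (torus n) euclideanreal (\<lambda>z. torus_w n r z i)" if "1 \<le> i" for i
    unfolding torus_w_def using that by (intro continuous_map_w_cos Re) auto
  fix i assume i: "i \<in> {1..n}"
  show "continuous_map (torus n) euclideanreal (\<lambda>z. torus_map n r z i)"
    using i assms by (auto simp: torus_map_def intro!: continuous_map_real_mult w Re Im)
qed (auto simp: torus_map_def)

lemma norm_torus_component: "z \<in> topspace (torus n) \<Longrightarrow> j \<in> {1..n-1} \<Longrightarrow> norm (z j) = 1"
  by (auto simp: topspace_torus PiE_iff)

lemma torus_w_pos:
  assumes "\<And>j. 1 \<le> j \<Longrightarrow> j \<le> n - 1 \<Longrightarrow> 0 \<le> r j"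
    and "\<And>j. 1 \<le> j \<Longrightarrow> j \<le> n - 1 \<Longrightarrow> r j > (\<Sum>k\<in>{j<..n-1}. r k)"
    and "z \<in> topspace (torus n)" "2 \<le> i" "i \<le> n"
  shows "torus_w n r z i > 0"
  unfolding torus_w_def
proof (rule w_cos_pos[OF assms(1,2) _ assms(4,5)])
  fix j assume "1 \<le> j" "j \<le> n - 1"
  then show "\<bar>Re (z j)\<bar> \<le> 1"
    using abs_Re_le_cmod[of "z j"] norm_torus_component[OF assms(3)] by auto
qed

lemma torus_w_mult_component:
  assumes "1 \<le> k" "k < n"
  shows "of_real (torus_w n r z (Suc k)) * z k =
    Complex (if k = 1 then torus_map n r z 1 else torus_w n r z k - r (k - 1)) (torus_map n r z (Suc k))"
  using assms by (auto simp: complex_eq_iff torus_map_def torus_w_def w_cos_less numeral_2_eq_2)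

lemma polar_form_unique:
  fixes u v :: complex
  assumes "0 < a" "0 < b" "norm u = 1" "norm v = 1" "of_real a * u = of_real b * v"
  shows "a = b \<and> u = v"
proof -
  have "norm (of_real a * u) = norm (of_real b * v)" using assms(5) by simp
  then have "a = b" using assms(1-4) by (simp add: norm_mult)
  then show ?thesis using assms by simp
qed

lemma inj_on_torus_map:
  assumes r: "\<And>j. 1 \<le> j \<Longrightarrow> j \<le> n - 1 \<Longrightarrow> 0 \<le> r j"
    and dominant: "\<And>j. 1 \<le> j \<Longrightarrow> j \<le> n - 1 \<Longrightarrow> r j > (\<Sum>k\<in>{j<..n-1}. r k)"
  shows "inj_on (torus_map n r) (topspace (torus n))"
proof (rule inj_onI)
  fix z z' assume z: "z \<in> topspace (torus n)" and z': "z' \<in> topspace (torus n)"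
    and eq: "torus_map n r z = torus_map n r z'"
  have next_component: "torus_w n r z (Suc k) = torus_w n r z' (Suc k) \<and> z k = z' k"
    if "1 \<le> k" "k < n" and prev: "k = 1 \<or> torus_w n r z k = torus_w n r z' k" for k
  proof (rule polar_form_unique)
    show "of_real (torus_w n r z (Suc k)) * z k = of_real (torus_w n r z' (Suc k)) * z' k"
      using prev that by (auto simp: torus_w_mult_component eq)
  qed (use that torus_w_pos[OF r dominant] norm_torus_component z z' in auto)
  have "torus_w n r z (Suc k) = torus_w n r z' (Suc k) \<and> z k = z' k" if "k \<in> {1..n-1}" for k
  proof -
    have "1 \<le> k" "k \<le> n - 1" using that by auto
    then show ?thesis
    proof (induction k rule: dec_induct)
      case base
      then show ?case using next_component[of 1] by auto
    next
      case (step k)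
      then show ?case using next_component[of "Suc k"] by auto
    qed
  qed
  then show "z = z'"
    using z z' by (auto simp: topspace_torus PiE_iff intro: extensionalityI)
qed

function w_partial :: "nat \<Rightarrow> (nat \<Rightarrow> real) \<Rightarrow> (nat \<Rightarrow> real) \<Rightarrow> nat \<Rightarrow> nat \<Rightarrow> real" where
  "w_partial n r \<theta> j i = (if n \<le> i then 0
     else w_partial n r \<theta> j (Suc i) * cos (\<theta> i) - (if j = i then w n r \<theta> (Suc i) * sin (\<theta> i) else 0))"
  by pat_completeness auto
termination by (relation "Wellfounded.measure (\<lambda>(n, r, \<theta>, j, i). n - i)") auto

declare w_partial.simps [simp del]

lemma has_real_derivative_cos_update:
  "((\<lambda>t. cos ((\<theta>(j := t)) i)) has_real_derivative (if i = j then - sin (\<theta> j) else 0)) (at (\<theta> j))"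
  by (cases "i = j") (auto intro: derivative_eq_intros)

lemma has_real_derivative_sin_update:
  "((\<lambda>t. sin ((\<theta>(j := t)) i)) has_real_derivative (if i = j then cos (\<theta> j) else 0)) (at (\<theta> j))"
  by (cases "i = j") (auto intro: derivative_eq_intros)

lemma has_real_derivative_w:
  "((\<lambda>t. w n r (\<theta>(j := t)) i) has_real_derivative w_partial n r \<theta> j i) (at (\<theta> j))"
proof (induction n r \<theta> i rule: w.induct)
  case (1 n r \<theta> i)
  show ?case
  proof (cases "n \<le> i")
    case True
    then show ?thesis by (subst w.simps, subst w_partial.simps) simp
  next
    case False
    have "((\<lambda>t. r (i - 1) + w n r (\<theta>(j := t)) (Suc i) * cos ((\<theta>(j := t)) i)) has_real_derivative
        0 + (w_partial n r \<theta> j (Suc i) * cos ((\<theta>(j := \<theta> j)) i)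
             + (if i = j then - sin (\<theta> j) else 0) * w n r (\<theta>(j := \<theta> j)) (Suc i))) (at (\<theta> j))"
      by (intro DERIV_add DERIV_const DERIV_mult "1.IH"[OF False] has_real_derivative_cos_update)
    then show ?thesis
      using False by (subst w.simps, subst w_partial.simps) (auto simp: algebra_simps)
  qed
qed

definition xc_partial :: "nat \<Rightarrow> (nat \<Rightarrow> real) \<Rightarrow> (nat \<Rightarrow> real) \<Rightarrow> nat \<Rightarrow> nat \<Rightarrow> real" where
  "xc_partial n r \<theta> i j = (if i = 1
     then w_partial n r \<theta> j 2 * cos (\<theta> 1) - (if j = 1 then w n r \<theta> 2 * sin (\<theta> 1) else 0)
     else w_partial n r \<theta> j i * sin (\<theta> (i - 1)) + (if j = i - 1 then w n r \<theta> i * cos (\<theta> (i - 1)) else 0))"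

lemma has_real_derivative_xc:
  "((\<lambda>t. xc n r (\<theta>(j := t)) i) has_real_derivative xc_partial n r \<theta> i j) (at (\<theta> j))"
proof (cases "i = 1")
  case True
  have "((\<lambda>t. w n r (\<theta>(j := t)) 2 * cos ((\<theta>(j := t)) 1)) has_real_derivative
      w_partial n r \<theta> j 2 * cos ((\<theta>(j := \<theta> j)) 1)
      + (if 1 = j then - sin (\<theta> j) else 0) * w n r (\<theta>(j := \<theta> j)) 2) (at (\<theta> j))"
    by (intro DERIV_mult has_real_derivative_w has_real_derivative_cos_update)
  then show ?thesis
    using True by (auto simp: xc_def xc_partial_def algebra_simps)
next
  case False
  have "((\<lambda>t. w n r (\<theta>(j := t)) i * sin ((\<theta>(j := t)) (i - 1))) has_real_derivative
      w_partial n r \<theta> j i * sin ((\<theta>(j := \<theta> j)) (i - 1))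
      + (if i - 1 = j then cos (\<theta> j) else 0) * w n r (\<theta>(j := \<theta> j)) i) (at (\<theta> j))"
    by (intro DERIV_mult has_real_derivative_w has_real_derivative_sin_update)
  then show ?thesis
    using False by (auto simp: xc_def xc_partial_def algebra_simps)
qed

definition w_dir :: "nat \<Rightarrow> (nat \<Rightarrow> real) \<Rightarrow> (nat \<Rightarrow> real) \<Rightarrow> (nat \<Rightarrow> real) \<Rightarrow> nat \<Rightarrow> real" where
  "w_dir n r \<theta> c i = (\<Sum>j=1..n-1. c j * w_partial n r \<theta> j i)"

lemma w_dir_less:
  assumes "1 \<le> i" "i < n"
  shows "w_dir n r \<theta> c i = w_dir n r \<theta> c (Suc i) * cos (\<theta> i) - c i * w n r \<theta> (Suc i) * sin (\<theta> i)"
proof -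
  have "w_dir n r \<theta> c i = (\<Sum>j=1..n-1. c j * w_partial n r \<theta> j (Suc i) * cos (\<theta> i)
      - (if j = i then c i * w n r \<theta> (Suc i) * sin (\<theta> i) else 0))"
    unfolding w_dir_def using assms
    by (intro sum.cong refl, subst w_partial.simps) (simp add: algebra_simps)
  also have "\<dots> = w_dir n r \<theta> c (Suc i) * cos (\<theta> i) - c i * w n r \<theta> (Suc i) * sin (\<theta> i)"
    using assms by (simp add: sum_subtractf w_dir_def sum_distrib_right)
  finally show ?thesis .
qed

lemma sum_xc_partial_1:
  assumes "n \<ge> 2"
  shows "(\<Sum>j=1..n-1. c j * xc_partial n r \<theta> 1 j)
    = w_dir n r \<theta> c 2 * cos (\<theta> 1) - c 1 * w n r \<theta> 2 * sin (\<theta> 1)"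
proof -
  have "(\<Sum>j=1..n-1. c j * xc_partial n r \<theta> 1 j) = (\<Sum>j=1..n-1. c j * w_partial n r \<theta> j 2 * cos (\<theta> 1)
      - (if j = 1 then c 1 * w n r \<theta> 2 * sin (\<theta> 1) else 0))"
    by (intro sum.cong refl) (simp add: xc_partial_def algebra_simps)
  also have "\<dots> = w_dir n r \<theta> c 2 * cos (\<theta> 1) - c 1 * w n r \<theta> 2 * sin (\<theta> 1)"
    using assms by (simp add: sum_subtractf w_dir_def sum_distrib_right)
  finally show ?thesis .
qed

lemma sum_xc_partial:
  assumes "2 \<le> i" "i \<le> n"
  shows "(\<Sum>j=1..n-1. c j * xc_partial n r \<theta> i j)
    = w_dir n r \<theta> c i * sin (\<theta> (i - 1)) + c (i - 1) * w n r \<theta> i * cos (\<theta> (i - 1))"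
proof -
  have "(\<Sum>j=1..n-1. c j * xc_partial n r \<theta> i j) = (\<Sum>j=1..n-1. c j * w_partial n r \<theta> j i * sin (\<theta> (i - 1))
      + (if j = i - 1 then c (i - 1) * w n r \<theta> i * cos (\<theta> (i - 1)) else 0))"
    using assms by (intro sum.cong refl) (simp add: xc_partial_def algebra_simps)
  also have "\<dots> = w_dir n r \<theta> c i * sin (\<theta> (i - 1)) + c (i - 1) * w n r \<theta> i * cos (\<theta> (i - 1))"
    using assms by (auto simp: sum.distrib w_dir_def sum_distrib_right)
  finally show ?thesis .
qed

lemma rotation_eq_zero:
  fixes a b t :: real
  assumes "a * cos t - b * sin t = 0" "a * sin t + b * cos t = 0"
  shows "a = 0 \<and> b = 0"
proof -
  have "(a * cos t - b * sin t)\<^sup>2 + (a * sin t + b * cos t)\<^sup>2 = (a\<^sup>2 + b\<^sup>2) * ((sin t)\<^sup>2 + (cos t)\<^sup>2)"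
    by algebra
  then have "a\<^sup>2 + b\<^sup>2 = 0" using assms by simp
  then show ?thesis by simp
qed

lemma xc_partials_independent:
  assumes n: "n \<ge> 2" and w_pos: "\<And>i. 2 \<le> i \<Longrightarrow> i \<le> n \<Longrightarrow> w n r \<theta> i > 0"
    and c: "\<And>i. i \<in> {1..n} \<Longrightarrow> (\<Sum>j=1..n-1. c j * xc_partial n r \<theta> i j) = 0"
    and k: "k \<in> {1..n-1}"
  shows "c k = 0"
proof -
  \<comment> \<open>Row \<open>k + 1\<close>, together with row 1 (if \<open>k = 1\<close>) or the recursion for \<open>w_dir k = 0\<close>,
    says that rotating \<open>(w_dir (k + 1), c\<^sub>k w\<^sub>k\<^sub>+\<^sub>1)\<close> by \<open>\<theta>\<^sub>k\<close> gives zero.\<close>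
  have next_coefficient: "w_dir n r \<theta> c (Suc k) = 0 \<and> c k = 0"
    if k: "1 \<le> k" "k < n" and prev: "k = 1 \<or> w_dir n r \<theta> c k = 0" for k
  proof -
    have "w_dir n r \<theta> c (Suc k) = 0 \<and> c k * w n r \<theta> (Suc k) = 0"
    proof (rule rotation_eq_zero)
      show "w_dir n r \<theta> c (Suc k) * cos (\<theta> k) - c k * w n r \<theta> (Suc k) * sin (\<theta> k) = 0"
        using prev c[of 1] sum_xc_partial_1[OF n] w_dir_less[OF k] n by (auto simp: numeral_2_eq_2)
      show "w_dir n r \<theta> c (Suc k) * sin (\<theta> k) + c k * w n r \<theta> (Suc k) * cos (\<theta> k) = 0"
        using c[of "Suc k"] sum_xc_partial[of "Suc k" n c r \<theta>] k by simp
    qed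
    then show ?thesis using w_pos[of "Suc k"] k by simp
  qed
  have "1 \<le> k" "k \<le> n - 1" using k by auto
  then have "w_dir n r \<theta> c (Suc k) = 0 \<and> c k = 0"
  proof (induction k rule: dec_induct)
    case base
    then show ?case using next_coefficient[of 1] n by simp
  next
    case (step k)
    then show ?case using next_coefficient[of "Suc k"] by simp
  qed
  then show ?thesis by simp
qed

theorem mainTheorem11:
  fixes n :: nat and r :: "nat \<Rightarrow> real"
  assumes "n \<ge> 2"
    and "\<And>i. 1 \<le> i \<Longrightarrow> i \<le> n - 1 \<Longrightarrow> r i > 0"
    and "\<And>i. 1 \<le> i \<Longrightarrow> i \<le> n - 1 \<Longrightarrow> r i > (\<Sum>j\<in>{i<..n-1}. r j)"
  shows "(\<exists>G. embedding_map (torus n) (Rn n) G \<and>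
            (\<forall>\<theta>. G (torus_pt n \<theta>) = restrict (xc n r \<theta>) {1..n}))
    \<and> (\<forall>\<theta>. \<exists>D. (\<forall>i\<in>{1..n}. \<forall>j\<in>{1..n-1}.
               ((\<lambda>t. xc n r (\<theta>(j := t)) i) has_real_derivative D i j) (at (\<theta> j)))
           \<and> (\<forall>c. (\<forall>i\<in>{1..n}. (\<Sum>j=1..n-1. c j * D i j) = 0) \<longrightarrow> (\<forall>j\<in>{1..n-1}. c j = 0)))
    \<and> (\<forall>\<theta>. xc n r (\<lambda>j. - \<theta> j) 1 = xc n r \<theta> 1)
    \<and> (\<forall>\<theta>. \<forall>i\<in>{2..n}. xc n r (\<lambda>j. - \<theta> j) i = - xc n r \<theta> i)"
proof -
  have r: "\<And>i. 1 \<le> i \<Longrightarrow> i \<le> n - 1 \<Longrightarrow> 0 \<le> r i"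
    using assms(2) by (simp add: less_imp_le)
  have embedding: "embedding_map (torus n) (Rn n) (torus_map n r)"
    using continuous_map_torus_map[OF assms(1)] compact_space_torus Hausdorff_space_Rn
      inj_on_torus_map[OF r assms(3)] by (rule continuous_imp_embedding_map)
  have w_positive: "\<And>\<theta> i. 2 \<le> i \<Longrightarrow> i \<le> n \<Longrightarrow> w n r \<theta> i > 0"
    using w_pos[OF r assms(3)] by blast
  show ?thesis
    by (intro conjI; use embedding torus_map_torus_pt[OF assms(1)] has_real_derivative_xc
        xc_partials_independent[OF assms(1) w_positive] in \<open>blast | simp add: xc_def w_minus\<close>)
qed

end
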